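(* Let $k,m\in\mathbb{N}$ and let $p_1,\ldots,p_m\in\mathbb{Z}[x_1,\ldots,x_k]$ be polynomials in $k$ variables with integer coefficients and without constant terms. Then for any finite partition $\mathcal{C}$ of $\mathbb{Z}$ and all sequences $f_1,\ldots,f_k:\mathbb{N}\to\mathbb{Z}$, there exist a cell $C\in\mathcal{C}$, an integer $a\in\mathbb{Z}$ and finite nonempty sets $F_1,\ldots,F_k\subseteq\mathbb{N}$ such that \[ \Big\{a+p_i\Big(\sum_{t\in F_1}f_1(t),\sum_{t\in F_2}f_2(t),\ldots,\sum_{t\in F_k}f_k(t)\Big): i=1,2,\ldots,m\Big\}\subseteq C. \]
   Context: $P_f(\mathbb{N})$ denotes the set of finite nonempty subsets of $\mathbb{N}$; the sets $F_1,\ldots,F_k$ are elements of $P_f(\mathbb{N})$ (the paper writes $F=F_1\times\cdots\times F_k\in\times_{i=1}^kP_f(\mathbb{N})$). *)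

theory Defs
  imports Main "HOL-Library.Disjoint_Sets"
begin

text \<open>A point of Z^k is a function nat => int (only entries below k matter).\<close>

definition int_poly_no_const :: "nat \<Rightarrow> ((nat \<Rightarrow> int) \<Rightarrow> int) \<Rightarrow> bool" where
  "int_poly_no_const k P \<longleftrightarrow>
     (\<exists>(S :: (nat \<Rightarrow> nat) set) (c :: (nat \<Rightarrow> nat) \<Rightarrow> int).
        finite S \<and>
        (\<forall>\<alpha>\<in>S. (\<forall>i\<ge>k. \<alpha> i = 0) \<and> \<alpha> \<noteq> (\<lambda>_. 0)) \<and>
        P = (\<lambda>x. \<Sum>\<alpha>\<in>S. c \<alpha> * (\<Prod>i<k. x i ^ \<alpha> i)))"

end

theory Submission
  imports Defs "HOL-Library.Function_Algebras" "HOL-Library.Multiset_Order"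
begin

text \<open>Walters' colour-focusing proof of the polynomial van der Waerden theorem, run with IP sums.
  A function \<open>u : \<int>\<^sup>\<omega> \<rightarrow> \<int>\<close> has degree at most \<open>d\<close> when all its \<open>(d + 1)\<close>-fold finite
  differences vanish, and integer polynomials are such functions. A finite family \<open>P\<close> of nonzero
  functions of finite degree vanishing at \<open>0\<close> is shown to be a van der Waerden family: for every
  finite colouring of \<open>\<int>\<close> and every \<open>N\<close> there are \<open>a\<close> and nonempty finite blocks \<open>F\<^sub>j\<close> beyond \<open>N\<close> such that the
  points \<open>a + p y\<close>, \<open>p \<in> P\<close>, with \<open>y\<^sub>j = \<Sum>t\<in>F\<^sub>j. f\<^sub>j t\<close>, are monochromatic.

  The proof is by PET induction on the multiset of degrees of the classes of \<open>P\<close> of equal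
  degree and equal top-order differences. For \<open>p \<in> P\<close> of minimal degree the differences
  \<open>q - p\<close> and their recentrings \<open>x \<mapsto> (q - p) (x + D) - (q - p) D\<close> form a family of smaller
  weight. Using it, colour focusing builds focal points \<open>a\<close> with \<open>r\<close> spokes
  \<open>{a + q D\<^sub>i - p D\<^sub>i | q \<in> P - {p}}\<close>, each monochromatic, in \<open>r\<close> distinct colours. Once \<open>r\<close> reaches
  the number of colours, \<open>a\<close> shares the colour of some spoke \<open>i\<close>, and \<open>a - p D\<^sub>i\<close> is the
  required configuration. All points are kept in a window \<open>[-M, M]\<close>, so that colour patterns
  around a point can themselves be used as a colouring with finitely many colours.\<close>

section \<open>Degree via finite differences\<close>

definition fdiff :: "'a::ab_group_add \<Rightarrow> ('a \<Rightarrow> 'b::ab_group_add) \<Rightarrow> 'a \<Rightarrow> 'b" where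
  "fdiff h u = (\<lambda>x. u (x + h) - u x)"

fun deg_le :: "nat \<Rightarrow> ('a::ab_group_add \<Rightarrow> 'b::ab_group_add) \<Rightarrow> bool" where
  "deg_le 0 u \<longleftrightarrow> (\<exists>c. u = (\<lambda>_. c))"
| "deg_le (Suc d) u \<longleftrightarrow> (\<forall>h. deg_le d (fdiff h u))"

lemma fdiff_const [simp]: "fdiff h (\<lambda>_. c) = 0"
  by (simp add: fdiff_def fun_eq_iff)

lemma fdiff_add [simp]: "fdiff h (u + v) = fdiff h u + fdiff h v"
  by (simp add: fdiff_def fun_eq_iff)

lemma fdiff_diff [simp]: "fdiff h (u - v) = fdiff h u - fdiff h v"
  by (simp add: fdiff_def fun_eq_iff)

lemma fdiff_cmult:
  fixes u :: "'a::ab_group_add \<Rightarrow> 'b::comm_ring"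
  shows "fdiff h (\<lambda>x. c * u x) = (\<lambda>x. c * fdiff h u x)"
  by (simp add: fdiff_def fun_eq_iff right_diff_distrib)

lemma fdiff_mult:
  fixes u v :: "'a::ab_group_add \<Rightarrow> 'b::comm_ring"
  shows "fdiff h (u * v) = fdiff h u * (\<lambda>x. v (x + h)) + u * fdiff h v"
  by (simp add: fdiff_def fun_eq_iff algebra_simps)

lemma fdiff_translate: "fdiff h (\<lambda>x. u (x + D)) = (\<lambda>x. fdiff h u (x + D))"
  by (simp add: fdiff_def fun_eq_iff algebra_simps)

lemma deg_le_const: "deg_le d (\<lambda>_. c)"
  by (induction d arbitrary: c) (auto simp: zero_fun_def)

lemma deg_le_Suc: "deg_le d u \<Longrightarrow> deg_le (Suc d) u"
  by (induction d arbitrary: u) (auto simp: zero_fun_def deg_le_const)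

lemma deg_le_mono: "deg_le d u \<Longrightarrow> d \<le> e \<Longrightarrow> deg_le e u"
  using deg_le_Suc by (induction e) (auto simp: le_Suc_eq)

lemma deg_le_add: "deg_le d u \<Longrightarrow> deg_le d v \<Longrightarrow> deg_le d (u + v)"
  by (induction d arbitrary: u v) (auto simp: fun_eq_iff)

lemma deg_le_diff: "deg_le d u \<Longrightarrow> deg_le d v \<Longrightarrow> deg_le d (u - v)"
  by (induction d arbitrary: u v) (auto simp: fun_eq_iff)

lemma deg_le_cmult:
  fixes u :: "'a::ab_group_add \<Rightarrow> 'b::comm_ring"
  shows "deg_le d u \<Longrightarrow> deg_le d (\<lambda>x. c * u x)"
  by (induction d arbitrary: u) (auto simp: fdiff_cmult)

lemma deg_le_translate: "deg_le d u \<Longrightarrow> deg_le d (\<lambda>x. u (x + D))"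
  by (induction d arbitrary: u) (auto simp: fdiff_translate)

lemma deg_le_sum:
  "finite S \<Longrightarrow> (\<And>s. s \<in> S \<Longrightarrow> deg_le d (w s)) \<Longrightarrow> deg_le d (\<lambda>x. \<Sum>s\<in>S. w s x)"
proof (induction S rule: finite_induct)
  case empty
  then show ?case by (simp add: deg_le_const)
next
  case (insert s S)
  then show ?case using deg_le_add[of d "w s" "\<lambda>x. \<Sum>s\<in>S. w s x"] by (simp add: plus_fun_def)
qed

lemma deg_le_mult:
  fixes u v :: "'a::ab_group_add \<Rightarrow> 'b::comm_ring"
  shows "deg_le a u \<Longrightarrow> deg_le b v \<Longrightarrow> deg_le (a + b) (u * v)"
proof (induction "a + b" arbitrary: a b u v)
  case 0
  then show ?case by (auto simp: times_fun_def)
next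
  case (Suc n)
  show ?case
  proof (cases a)
    case 0
    with Suc.prems obtain c where "u = (\<lambda>_. c)" by auto
    then show ?thesis using deg_le_cmult[OF Suc.prems(2), of c] 0 by (simp add: times_fun_def)
  next
    case a: (Suc a')
    show ?thesis
    proof (cases b)
      case 0
      with Suc.prems obtain c where "v = (\<lambda>_. c)" by auto
      then show ?thesis using deg_le_cmult[OF Suc.prems(1), of c] 0
        by (simp add: times_fun_def mult.commute)
    next
      case b: (Suc b')
      have "deg_le n (fdiff h u * (\<lambda>x. v (x + h)) + u * fdiff h v)" for h
      proof (rule deg_le_add)
        have "deg_le a' (fdiff h u)" "deg_le b (\<lambda>x. v (x + h))"
          using Suc.prems a deg_le_translate by auto
        then show "deg_le n (fdiff h u * (\<lambda>x. v (x + h)))"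
          using Suc.hyps a by simp
        have "deg_le b' (fdiff h v)"
          using Suc.prems b by simp
        then show "deg_le n (u * fdiff h v)"
          using Suc.hyps Suc.prems b by simp
      qed
      then show ?thesis by (simp add: Suc.hyps(2)[symmetric] fdiff_mult)
    qed
  qed
qed

lemma deg_le_prod:
  fixes w :: "'i \<Rightarrow> 'a::ab_group_add \<Rightarrow> 'b::comm_ring_1"
  shows "finite A \<Longrightarrow> (\<And>i. i \<in> A \<Longrightarrow> deg_le (e i) (w i)) \<Longrightarrow>
    deg_le (\<Sum>i\<in>A. e i) (\<lambda>x. \<Prod>i\<in>A. w i x)"
proof (induction A rule: finite_induct)
  case empty
  then show ?case by (simp add: deg_le_const)
next
  case (insert i A)
  then show ?case
    using deg_le_mult[of "e i" "w i" "sum e A" "\<lambda>x. \<Prod>i\<in>A. w i x"] by (simp add: times_fun_def)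
qed

lemma deg_le_power:
  fixes u :: "'a::ab_group_add \<Rightarrow> 'b::comm_ring_1"
  shows "deg_le d u \<Longrightarrow> deg_le (n * d) (\<lambda>x. u x ^ n)"
  using deg_le_prod[of "{..<n}" "\<lambda>_. d" "\<lambda>_. u"] by simp

lemma deg_le_coordinate: "deg_le 1 (\<lambda>x :: 'i \<Rightarrow> 'b::ab_group_add. x i)"
  by (auto simp: fdiff_def)

lemma int_poly_no_const_deg_le:
  assumes "int_poly_no_const k P"
  shows "\<exists>d. deg_le d P"
proof -
  obtain S c where S: "finite S"
    and P: "P = (\<lambda>x. \<Sum>\<alpha>\<in>S. c \<alpha> * (\<Prod>i<k. x i ^ \<alpha> i))"
    using assms unfolding int_poly_no_const_def by blast
  define d where "d = (\<Sum>\<alpha>\<in>S. \<Sum>i<k. \<alpha> i)"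
  have "deg_le d (\<lambda>x. c \<alpha> * (\<Prod>i<k. x i ^ \<alpha> i))" if "\<alpha> \<in> S" for \<alpha>
  proof (rule deg_le_cmult[OF deg_le_mono])
    show "deg_le (\<Sum>i<k. \<alpha> i) (\<lambda>x :: nat \<Rightarrow> int. \<Prod>i<k. x i ^ \<alpha> i)"
      by (intro deg_le_prod) (simp_all add: deg_le_power[OF deg_le_coordinate, simplified])
    show "(\<Sum>i<k. \<alpha> i) \<le> d"
      unfolding d_def using S that by (intro member_le_sum) auto
  qed
  then have "deg_le d P"
    unfolding P by (intro deg_le_sum[OF S])
  then show ?thesis ..
qed

lemma int_poly_no_const_zero:
  assumes "int_poly_no_const k P"
  shows "P 0 = 0"
proof -
  obtain S c where S: "\<forall>\<alpha>\<in>S. (\<forall>i\<ge>k. \<alpha> i = 0) \<and> \<alpha> \<noteq> (\<lambda>_. 0)"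
    and P: "P = (\<lambda>x. \<Sum>\<alpha>\<in>S. c \<alpha> * (\<Prod>i<k. x i ^ \<alpha> i))"
    using assms unfolding int_poly_no_const_def by blast
  have "\<exists>i<k. \<alpha> i \<noteq> 0" if "\<alpha> \<in> S" for \<alpha>
    using S that by (metis le_eq_less_or_eq linorder_not_le)
  then show ?thesis unfolding P by (fastforce intro!: sum.neutral)
qed

section \<open>Leading classes and the PET weight\<close>

definition deg :: "('a::ab_group_add \<Rightarrow> 'b::ab_group_add) \<Rightarrow> nat" where
  "deg u = (LEAST d. deg_le d u)"

lemma deg_le_deg: "deg_le d u \<Longrightarrow> deg_le (deg u) u"
  unfolding deg_def by (rule LeastI)

lemma deg_least: "deg_le d u \<Longrightarrow> deg u \<le> d"
  unfolding deg_def by (rule Least_le)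

lemma deg_le_iff: "deg_le d u \<Longrightarrow> deg_le e u \<longleftrightarrow> deg u \<le> e"
  using deg_le_deg deg_least deg_le_mono by blast

lemma deg_eq_Suc: "deg_le (Suc e) u \<Longrightarrow> \<not> deg_le e u \<Longrightarrow> deg u = Suc e"
  using deg_le_iff by (metis le_SucE)

fun fdiffs :: "'a list \<Rightarrow> ('a::ab_group_add \<Rightarrow> 'b::ab_group_add) \<Rightarrow> 'a \<Rightarrow> 'b" where
  "fdiffs [] u = u"
| "fdiffs (h # hs) u = fdiffs hs (fdiff h u)"

lemma fdiffs_snoc [simp]: "fdiffs (hs @ [h]) u = fdiff h (fdiffs hs u)"
  by (induction hs arbitrary: u) auto

lemma fdiffs_diff [simp]: "fdiffs hs (u - v) = fdiffs hs u - fdiffs hs v"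
  by (induction hs arbitrary: u v) auto

lemma deg_le_iff_fdiffs:
  "deg_le d u \<longleftrightarrow> (\<forall>hs. length hs = d \<longrightarrow> (\<exists>c. fdiffs hs u = (\<lambda>_. c)))"
proof (induction d arbitrary: u)
  case 0
  then show ?case by simp
next
  case (Suc d)
  then show ?case by (metis deg_le.simps(2) fdiffs.simps(2) length_Suc_conv)
qed

lemma deg_le_0_iff_fdiff: "deg_le 0 w \<longleftrightarrow> (\<forall>h. fdiff h w = 0)"
proof
  assume "\<forall>h. fdiff h w = 0"
  then have "fdiff x w 0 = 0" for x
    by simp
  then have "w x = w 0" for x
    by (simp add: fdiff_def)
  then show "deg_le 0 w"
    by (auto simp: fun_eq_iff)
qed auto

definition lead_form :: "nat \<Rightarrow> ('a::ab_group_add \<Rightarrow> 'b::ab_group_add) \<Rightarrow> 'a list \<Rightarrow> 'b" where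
  "lead_form d u = (\<lambda>hs. if length hs = d then fdiffs hs u 0 else 0)"

lemma lead_form_diff: "lead_form d (u - v) = lead_form d u - lead_form d v"
  by (simp add: lead_form_def fun_eq_iff)

text \<open>The \<open>(d + 1)\<close>-fold differences of a function of degree at most \<open>d + 1\<close> are constant, so
  their values at \<open>0\<close> determine them.\<close>

lemma lead_form_eq_0_iff:
  assumes "deg_le (Suc d) u"
  shows "lead_form (Suc d) u = 0 \<longleftrightarrow> deg_le d u"
proof
  assume lf0: "lead_form (Suc d) u = 0"
  have "fdiff h (fdiffs hs u) = 0" if "length hs = d" for hs h
  proof -
    have "length (hs @ [h]) = Suc d"
      using that by simp
    then obtain c where c: "fdiffs (hs @ [h]) u = (\<lambda>_. c)"
      using assms unfolding deg_le_iff_fdiffs[of "Suc d"] by blast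
    moreover have "fdiffs (hs @ [h]) u 0 = 0"
      using fun_cong[OF lf0, of "hs @ [h]"] that by (simp add: lead_form_def)
    ultimately have "fdiffs (hs @ [h]) u = 0"
      by (simp add: fun_eq_iff)
    then show ?thesis
      by simp
  qed
  then have "deg_le 0 (fdiffs hs u)" if "length hs = d" for hs
    using that deg_le_0_iff_fdiff by blast
  then show "deg_le d u"
    unfolding deg_le_iff_fdiffs[of d] by simp
next
  assume "deg_le d u"
  then have "fdiffs (hs @ [h]) u = 0" if "length hs = d" for hs h
    using that unfolding deg_le_iff_fdiffs[of d] by auto
  then have "fdiffs hs u 0 = 0" if "length hs = Suc d" for hs
    using that by (auto simp: length_Suc_conv_rev)
  then show "lead_form (Suc d) u = 0"
    by (simp add: lead_form_def fun_eq_iff)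
qed

definition lead_class :: "('a::ab_group_add \<Rightarrow> 'b::ab_group_add) \<Rightarrow> nat \<times> ('a list \<Rightarrow> 'b)" where
  "lead_class u = (deg u, lead_form (deg u) u)"

lemma lead_class_eqI:
  assumes w: "deg_le d w" and hw: "deg_le e (h - w)" and "e < deg w"
  shows "lead_class h = lead_class w"
proof -
  obtain e' where e': "deg w = Suc e'"
    using \<open>e < deg w\<close> by (cases "deg w") auto
  have w1: "deg_le (Suc e') w" and w2: "\<not> deg_le e' w"
    using deg_le_iff[OF w] e' by auto
  have hw': "deg_le e' (h - w)"
    using deg_le_mono[OF hw] \<open>e < deg w\<close> e' by simp
  have "deg_le (Suc e') h"
    using deg_le_add[OF deg_le_Suc[OF hw'] w1] by simp
  moreover have "\<not> deg_le e' h"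
    using deg_le_diff[OF _ hw', of h] w2 by auto
  ultimately have "deg h = deg w"
    using deg_eq_Suc e' by simp
  moreover have "lead_form (Suc e') (h - w) = 0"
    using lead_form_eq_0_iff[OF deg_le_Suc[OF hw']] hw' by simp
  then have "lead_form (Suc e') h = lead_form (Suc e') w"
    by (simp add: lead_form_diff)
  ultimately show ?thesis
    using e' by (simp add: lead_class_def)
qed

definition admissible :: "('a::ab_group_add \<Rightarrow> 'b::ab_group_add) \<Rightarrow> bool" where
  "admissible u \<longleftrightarrow> (\<exists>d. deg_le d u) \<and> u 0 = 0 \<and> u \<noteq> 0"

lemma admissible_deg_pos:
  assumes "admissible u"
  shows "0 < deg u"
proof (rule ccontr)
  assume "\<not> 0 < deg u"
  then have "deg_le 0 u"
    using assms deg_le_deg unfolding admissible_def by fastforce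
  then show False
    using assms by (auto simp: admissible_def zero_fun_def)
qed

lemma admissible_diff:
  assumes "admissible p" and "admissible q" and "p \<noteq> q"
  shows "admissible (q - p)"
proof -
  obtain d d' where "deg_le d p" and "deg_le d' q"
    using assms unfolding admissible_def by blast
  then have "deg_le (max d d') (q - p)"
    using deg_le_diff deg_le_mono by (metis max.cobounded1 max.cobounded2)
  moreover have "q - p \<noteq> 0"
    using assms(3) by simp
  ultimately show ?thesis
    using assms(1,2) unfolding admissible_def by auto
qed

definition recentre :: "'a::ab_group_add \<Rightarrow> ('a \<Rightarrow> 'b::ab_group_add) \<Rightarrow> 'a \<Rightarrow> 'b" where
  "recentre D w = (\<lambda>x. w (x + D) - w D)"

lemma deg_le_recentre: "deg_le d w \<Longrightarrow> deg_le d (recentre D w)"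
  unfolding recentre_def using deg_le_diff[OF deg_le_translate deg_le_const]
  by (simp add: fun_diff_def)

text \<open>Recentring changes \<open>w\<close> by the lower degree function \<open>fdiff D w\<close> minus a constant.\<close>

lemma lead_class_recentre:
  assumes "deg_le d w" and "0 < deg w"
  shows "lead_class (recentre D w) = lead_class w"
proof (rule lead_class_eqI[OF assms(1)])
  show "deg w - 1 < deg w"
    using assms(2) by simp
  have "recentre D w - w = fdiff D w - (\<lambda>_. w D)"
    by (simp add: recentre_def fdiff_def fun_eq_iff add.commute)
  moreover have "deg_le (deg w - 1) (fdiff D w)"
    using deg_le_deg[OF assms(1)] assms(2) by (cases "deg w") auto
  ultimately show "deg_le (deg w - 1) (recentre D w - w)"
    by (simp add: deg_le_diff deg_le_const)
qed

lemma admissible_recentre: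
  assumes "admissible w"
  shows "admissible (recentre D w)"
proof -
  obtain d where d: "deg_le d w"
    using assms unfolding admissible_def by blast
  have "deg (recentre D w) = deg w"
    using lead_class_recentre[OF d admissible_deg_pos[OF assms]] by (simp add: lead_class_def)
  moreover have "deg (0 :: 'a \<Rightarrow> 'b) = 0"
    using deg_least[of 0 "0 :: 'a \<Rightarrow> 'b"] by (auto simp: zero_fun_def)
  ultimately have "recentre D w \<noteq> 0"
    using admissible_deg_pos[OF assms] by auto
  then show ?thesis
    unfolding admissible_def using deg_le_recentre[OF d] by (auto simp: recentre_def)
qed

definition shift_class ::
    "('a::ab_group_add \<Rightarrow> 'b::ab_group_add) \<Rightarrow> nat \<times> ('a list \<Rightarrow> 'b) \<Rightarrow> nat \<times> ('a list \<Rightarrow> 'b)" where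
  "shift_class p c = (if fst c = deg p then (fst c, snd c - lead_form (deg p) p) else c)"

lemma fst_shift_class [simp]: "fst (shift_class p c) = fst c"
  by (simp add: shift_class_def)

lemma inj_shift_class: "inj (shift_class p)"
  by (auto simp: inj_def shift_class_def prod_eq_iff split: if_splits)

lemma lead_class_diff:
  assumes p: "deg_le d p" and q: "deg_le d' q" and "deg p \<le> deg q" and "0 < deg p"
  shows "deg (q - p) < deg p \<or>
    (lead_class (q - p) = shift_class p (lead_class q) \<and> lead_class q \<noteq> lead_class p)"
proof -
  obtain e where e: "deg q = Suc e"
    using assms(3,4) by (cases "deg q") auto
  have q1: "deg_le (Suc e) q" and q2: "\<not> deg_le e q"
    using deg_le_iff[OF q] e by auto
  have p1: "deg_le (Suc e) p"
    using deg_le_iff[OF p] assms(3) e by simp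
  have qp: "deg_le (Suc e) (q - p)"
    using deg_le_diff[OF q1 p1] .
  show ?thesis
  proof (cases "deg_le e (q - p)")
    case True
    have "\<not> deg_le e p"
      using deg_le_add[OF True] q2 by fastforce
    then have "deg p = Suc e"
      using deg_eq_Suc[OF p1] by simp
    then show ?thesis
      using deg_least[OF True] by simp
  next
    case False
    have lf: "lead_form (Suc e) (q - p) = lead_form (Suc e) q - lead_form (Suc e) p"
      by (rule lead_form_diff)
    have dqp: "deg (q - p) = Suc e"
      using deg_eq_Suc[OF qp False] .
    have "lead_class (q - p) = shift_class p (lead_class q)"
    proof (cases "deg p = Suc e")
      case True
      then show ?thesis
        using dqp e lf by (simp add: lead_class_def shift_class_def)
    next
      case False
      then have "deg_le e p"
        using deg_le_iff[OF p] assms(3) e by simp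
      then have "lead_form (Suc e) p = 0"
        using lead_form_eq_0_iff[OF p1] by simp
      then show ?thesis
        using False dqp e lf by (simp add: lead_class_def shift_class_def)
    qed
    moreover have "lead_class q \<noteq> lead_class p"
    proof
      assume "lead_class q = lead_class p"
      then have "lead_form (Suc e) (q - p) = 0"
        using e lf by (auto simp: lead_class_def)
      then show False
        using lead_form_eq_0_iff[OF qp] False by simp
    qed
    ultimately show ?thesis
      by simp
  qed
qed

lemma fst_lead_class [simp]: "fst (lead_class u) = deg u"
  by (simp add: lead_class_def)

definition pet_weight :: "('a::ab_group_add \<Rightarrow> 'b::ab_group_add) set \<Rightarrow> nat multiset" where
  "pet_weight P = image_mset fst (mset_set (lead_class ` P))"

lemma less_multiset_replace_by_smaller:
  fixes N :: "'a::linorder multiset"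
  assumes "d \<in># N" and "A \<subseteq># N - {#d#}" and "\<forall>x\<in>#B. x < d"
  shows "A + B < N"
proof -
  have "A + B \<le> (N - {#d#}) + B"
    using subset_eq_imp_le_multiset[OF assms(2)] by (rule add_right_mono)
  also have "\<dots> < (N - {#d#}) + {#d#}"
    using assms(3) by simp
  also have "\<dots> = N"
    using assms(1) by simp
  finally show ?thesis .
qed

lemma lead_classes_ge_subset_shift:
  assumes P: "\<forall>u\<in>P. admissible u" and "p \<in> P" and min: "\<forall>q\<in>P. deg p \<le> deg q"
    and Q: "\<forall>h\<in>Q. \<exists>q\<in>P - {p}. lead_class h = lead_class (q - p)"
  shows "{c \<in> lead_class ` Q. deg p \<le> fst c} \<subseteq> shift_class p ` (lead_class ` P - {lead_class p})"
proof
  fix c assume "c \<in> {c \<in> lead_class ` Q. deg p \<le> fst c}"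
  then obtain h where h: "h \<in> Q" "c = lead_class h" "deg p \<le> deg h"
    by auto
  obtain q where q: "q \<in> P - {p}" "lead_class h = lead_class (q - p)"
    using Q h(1) by blast
  have "deg p \<le> deg (q - p)"
    using h(3) arg_cong[OF q(2), of fst] by simp
  have adm: "admissible p" "admissible q"
    using P \<open>p \<in> P\<close> q(1) by auto
  then obtain d d' where "deg_le d p" "deg_le d' q"
    unfolding admissible_def by blast
  then have "c = shift_class p (lead_class q) \<and> lead_class q \<noteq> lead_class p"
    using lead_class_diff[of d p d' q] admissible_deg_pos[OF adm(1)] min q h
      \<open>deg p \<le> deg (q - p)\<close> by auto
  then show "c \<in> shift_class p ` (lead_class ` P - {lead_class p})"
    using q(1) by auto
qed

lemma image_mset_fst_shift_class:
  "image_mset fst (mset_set (shift_class p ` S)) = image_mset fst (mset_set S)"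
  by (simp add: image_mset_mset_set[symmetric] inj_on_subset[OF inj_shift_class]
      multiset.map_comp comp_def)

text \<open>The classes of degree below \<open>deg p\<close> are new but smaller; the others are images of the
  classes of \<open>P\<close> other than that of \<open>p\<close>, under a map preserving degrees.\<close>

lemma pet_weight_less:
  assumes P: "finite P" "\<forall>u\<in>P. admissible u" and "p \<in> P" and min: "\<forall>q\<in>P. deg p \<le> deg q"
    and "finite Q" and Q: "\<forall>h\<in>Q. \<exists>q\<in>P - {p}. lead_class h = lead_class (q - p)"
  shows "pet_weight Q < pet_weight P"
proof -
  define K where "K = lead_class ` P"
  define A where "A = {c \<in> lead_class ` Q. deg p \<le> fst c}"
  define B where "B = {c \<in> lead_class ` Q. fst c < deg p}"
  have "finite K" "finite A" "finite B"
    using \<open>finite P\<close> \<open>finite Q\<close> by (simp_all add: K_def A_def B_def)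
  have "lead_class ` Q = A \<union> B" "A \<inter> B = {}"
    by (auto simp: A_def B_def)
  then have "pet_weight Q = image_mset fst (mset_set A) + image_mset fst (mset_set B)"
    unfolding pet_weight_def using mset_set_Union[OF \<open>finite A\<close> \<open>finite B\<close>] by simp
  moreover have "image_mset fst (mset_set A) \<subseteq># pet_weight P - {#deg p#}"
  proof -
    have "image_mset fst (mset_set A) \<subseteq>#
        image_mset fst (mset_set (shift_class p ` (K - {lead_class p})))"
      using lead_classes_ge_subset_shift[OF P(2) \<open>p \<in> P\<close> min Q] \<open>finite K\<close>
      unfolding A_def K_def by (intro image_mset_subseteq_mono subset_imp_msubset_mset_set) auto
    also have "\<dots> = pet_weight P - {#deg p#}"
      using \<open>finite K\<close> \<open>p \<in> P\<close>
      by (simp add: image_mset_fst_shift_class pet_weight_def K_def mset_set_Diff image_mset_Diff)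
    finally show ?thesis .
  qed
  moreover have "deg p \<in># pet_weight P"
    using \<open>finite K\<close> \<open>p \<in> P\<close> by (force simp: pet_weight_def K_def)
  moreover have "\<forall>x\<in>#image_mset fst (mset_set B). x < deg p"
    using \<open>finite B\<close> by (auto simp: B_def)
  ultimately show ?thesis
    using less_multiset_replace_by_smaller by metis
qed

definition pet_family ::
    "('a::ab_group_add \<Rightarrow> 'b::ab_group_add) \<Rightarrow> ('a \<Rightarrow> 'b) set \<Rightarrow> 'a set \<Rightarrow> ('a \<Rightarrow> 'b) set" where
  "pet_family p P Ds = (\<lambda>q. q - p) ` (P - {p}) \<union> (\<Union>D\<in>Ds. (\<lambda>q. recentre D (q - p)) ` (P - {p}))"

lemma finite_pet_family: "finite P \<Longrightarrow> finite Ds \<Longrightarrow> finite (pet_family p P Ds)"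
  by (simp add: pet_family_def)

lemma admissible_pet_family:
  assumes "\<forall>u\<in>P. admissible u" and "p \<in> P" and "h \<in> pet_family p P Ds"
  shows "admissible h"
proof -
  have "admissible (q - p)" if "q \<in> P - {p}" for q
    using assms(1,2) that admissible_diff by blast
  then show ?thesis
    using assms(3) admissible_recentre unfolding pet_family_def by auto
qed

lemma pet_weight_pet_family_less:
  assumes "finite P" and adm: "\<forall>u\<in>P. admissible u" and "p \<in> P" and "\<forall>q\<in>P. deg p \<le> deg q"
    and "finite Ds"
  shows "pet_weight (pet_family p P Ds) < pet_weight P"
proof (rule pet_weight_less[OF assms(1-4) finite_pet_family[OF assms(1,5)]])
  have "lead_class (recentre D (q - p)) = lead_class (q - p)" if "q \<in> P - {p}" for D q
  proof -
    have adm_qp: "admissible (q - p)"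
      using that adm \<open>p \<in> P\<close> admissible_diff by blast
    then obtain d where "deg_le d (q - p)"
      unfolding admissible_def by blast
    then show ?thesis
      using lead_class_recentre admissible_deg_pos[OF adm_qp] by blast
  qed
  then show "\<forall>h\<in>pet_family p P Ds. \<exists>q\<in>P - {p}. lead_class h = lead_class (q - p)"
    by (auto simp: pet_family_def)
qed

section \<open>Colour focusing\<close>

lemma window_colouring:
  "\<exists>n::nat. \<forall>\<chi> :: int \<Rightarrow> nat. (\<forall>x. \<chi> x < c) \<longrightarrow> (\<exists>\<chi>'. (\<forall>x. \<chi>' x < n) \<and>
     (\<forall>x y s. \<chi>' x = \<chi>' y \<longrightarrow> \<bar>s\<bar> \<le> int R \<longrightarrow> \<chi> (x + s) = \<chi> (y + s)))"
proof -
  define W where "W = {- int R..int R}"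
  define Pat where "Pat = {\<pi> :: int \<Rightarrow> nat. \<forall>s. (s \<in> W \<longrightarrow> \<pi> s \<in> {..<c}) \<and> (s \<notin> W \<longrightarrow> \<pi> s = 0)}"
  have "finite Pat"
    unfolding Pat_def by (rule finite_set_of_finite_funs) (auto simp: W_def)
  then obtain e :: "(int \<Rightarrow> nat) \<Rightarrow> nat" and n where e: "e ` Pat = {i. i < n}" "inj_on e Pat"
    using finite_imp_inj_to_nat_seg by blast
  have "\<exists>\<chi>'. (\<forall>x. \<chi>' x < n) \<and>
     (\<forall>x y s. \<chi>' x = \<chi>' y \<longrightarrow> \<bar>s\<bar> \<le> int R \<longrightarrow> \<chi> (x + s) = \<chi> (y + s))"
    if "\<forall>x. \<chi> x < c" for \<chi> :: "int \<Rightarrow> nat"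
  proof (intro exI conjI allI impI)
    define pat where "pat x = (\<lambda>s. if s \<in> W then \<chi> (x + s) else 0)" for x
    have pat: "pat x \<in> Pat" for x
      using that by (simp add: Pat_def pat_def)
    show "e (pat x) < n" for x
      using e(1) pat by blast
    fix x y s
    assume "e (pat x) = e (pat y)" and "\<bar>s\<bar> \<le> int R"
    then have "pat x = pat y" and "s \<in> W"
      using e(2) pat by (auto simp: inj_on_def W_def)
    then show "\<chi> (x + s) = \<chi> (y + s)"
      by (metis pat_def)
  qed
  then show ?thesis
    by blast
qed

context
  fixes f :: "nat \<Rightarrow> nat \<Rightarrow> int" and k :: nat
begin

definition ip_sum :: "(nat \<Rightarrow> nat set) \<Rightarrow> nat \<Rightarrow> int" where
  "ip_sum G = (\<lambda>j. \<Sum>t\<in>G j. f j t)"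

definition blocks :: "nat \<Rightarrow> nat \<Rightarrow> (nat \<Rightarrow> nat set) \<Rightarrow> bool" where
  "blocks N M G \<longleftrightarrow> (\<forall>j<k. G j \<noteq> {} \<and> G j \<subseteq> {N<..M}) \<and> (\<forall>j\<ge>k. G j = {})"

lemma blocks_mono: "blocks N M G \<Longrightarrow> N' \<le> N \<Longrightarrow> M \<le> M' \<Longrightarrow> blocks N' M' G"
  unfolding blocks_def by force

lemma blocks_union:
  assumes "blocks N M G" and "blocks M M' G'"
  shows "blocks N M' (\<lambda>j. G j \<union> G' j)" and "ip_sum (\<lambda>j. G j \<union> G' j) = ip_sum G + ip_sum G'"
proof -
  have sub: "G j \<subseteq> {N<..M}" "G' j \<subseteq> {M<..M'}" for j
    using assms by (cases "j < k"; force simp: blocks_def)+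
  show "blocks N M' (\<lambda>j. G j \<union> G' j)"
    using assms sub unfolding blocks_def by fastforce
  have "G j \<inter> G' j = {}" "finite (G j)" "finite (G' j)" for j
    using sub[of j] finite_subset by fastforce+
  then show "ip_sum (\<lambda>j. G j \<union> G' j) = ip_sum G + ip_sum G'"
    by (simp add: ip_sum_def fun_eq_iff sum.union_disjoint)
qed

lemma finite_blocks: "finite {G. blocks N M G}"
proof (rule finite_subset)
  show "{G. blocks N M G} \<subseteq> {G. \<forall>j. (j \<in> {..<k} \<longrightarrow> G j \<in> Pow {N<..M}) \<and> (j \<notin> {..<k} \<longrightarrow> G j = {})}"
    unfolding blocks_def by auto
  show "finite {G. \<forall>j. (j \<in> {..<k} \<longrightarrow> G j \<in> Pow {N<..M}) \<and> (j \<notin> {..<k} \<longrightarrow> G j = {})}"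
    by (rule finite_set_of_finite_funs) auto
qed

lemma blocks_bounded: "\<exists>B::nat. \<forall>G. blocks N M G \<longrightarrow> \<bar>u (ip_sum G)\<bar> \<le> int B"
proof -
  define B where "B = Max ((\<lambda>G. nat \<bar>u (ip_sum G)\<bar>) ` {G. blocks N M G})"
  have "\<bar>u (ip_sum G)\<bar> \<le> int B" if "blocks N M G" for G
    using finite_blocks that Max_ge[of "(\<lambda>G. nat \<bar>u (ip_sum G)\<bar>) ` {G. blocks N M G}"]
    by (fastforce simp: B_def)
  then show ?thesis
    by blast
qed

definition mono_config :: "((nat \<Rightarrow> int) \<Rightarrow> int) set \<Rightarrow> (int \<Rightarrow> nat) \<Rightarrow> nat \<Rightarrow> nat \<Rightarrow> bool" where
  "mono_config P \<chi> N M \<longleftrightarrow> (\<exists>a G col. blocks N M G \<and> \<bar>a\<bar> \<le> int M \<and>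
     (\<forall>p\<in>P. \<bar>a + p (ip_sum G)\<bar> \<le> int M \<and> \<chi> (a + p (ip_sum G)) = col))"

definition vdw_family :: "((nat \<Rightarrow> int) \<Rightarrow> int) set \<Rightarrow> bool" where
  "vdw_family P \<longleftrightarrow> (\<forall>c N. \<exists>M. \<forall>\<chi>. (\<forall>x. \<chi> x < c) \<longrightarrow> mono_config P \<chi> N M)"

lemma mono_config_mono:
  assumes "mono_config P \<chi> N M" and "M \<le> M'"
  shows "mono_config P \<chi> N M'"
proof -
  obtain a G col where G: "blocks N M G" and "\<bar>a\<bar> \<le> int M"
    and P: "\<forall>p\<in>P. \<bar>a + p (ip_sum G)\<bar> \<le> int M \<and> \<chi> (a + p (ip_sum G)) = col"
    using assms(1) unfolding mono_config_def by blast
  moreover have "int M \<le> int M'"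
    using assms(2) by simp
  ultimately show ?thesis
    unfolding mono_config_def using blocks_mono[OF G order_refl assms(2)]
    by (intro exI[of _ a] exI[of _ G] exI[of _ col]) force
qed

lemma mono_config_translate:
  assumes "mono_config P (\<lambda>x. \<chi> (t + x)) N M" and "\<bar>t\<bar> \<le> int M'"
  shows "mono_config P \<chi> N (M + M')"
proof -
  obtain a G col where G: "blocks N M G" and "\<bar>a\<bar> \<le> int M"
    and P: "\<forall>p\<in>P. \<bar>a + p (ip_sum G)\<bar> \<le> int M \<and> \<chi> (t + (a + p (ip_sum G))) = col"
    using assms(1) unfolding mono_config_def by blast
  then have "\<bar>t + a\<bar> \<le> int (M + M')"
    and "\<forall>p\<in>P. \<bar>t + a + p (ip_sum G)\<bar> \<le> int (M + M') \<and> \<chi> (t + a + p (ip_sum G)) = col"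
    using assms(2) by (auto simp: add.assoc)
  then show ?thesis
    unfolding mono_config_def using blocks_mono[OF G order_refl, of "M + M'"] by auto
qed

lemma vdw_family_subsingleton:
  assumes "P \<subseteq> {p}"
  shows "vdw_family P"
  unfolding vdw_family_def
proof (intro allI exI impI)
  fix c N and \<chi> :: "int \<Rightarrow> nat"
  define G where "G = (\<lambda>j. if j < k then {Suc N} else {})"
  define M where "M = Suc N + nat \<bar>p (ip_sum G)\<bar>"
  have "blocks N M G"
    unfolding blocks_def G_def M_def by auto
  then show "mono_config P \<chi> N M"
    unfolding mono_config_def using assms
    by (intro exI[of _ 0] exI[of _ G] exI[of _ "\<chi> (p (ip_sum G))"]) (auto simp: M_def)
qed

text \<open>Apply \<open>vdw_family Q\<close> to the colouring of each integer by the pattern of \<open>\<chi>\<close> on the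
  window of radius \<open>M\<close> around it.\<close>

lemma recurrent_windows:
  fixes c :: nat
  assumes "vdw_family Q" and "Q \<noteq> {}"
  obtains M' where "\<And>\<chi>. \<forall>x. \<chi> x < c \<Longrightarrow> \<exists>b Gy t. blocks M M' Gy \<and> \<bar>b\<bar> \<le> int M' \<and> \<bar>t\<bar> \<le> int M' \<and>
    (\<forall>h\<in>Q. \<bar>b + h (ip_sum Gy)\<bar> \<le> int M' \<and>
      (\<forall>s. \<bar>s\<bar> \<le> int M \<longrightarrow> \<chi> (b + h (ip_sum Gy) + s) = \<chi> (t + s)))"
proof -
  obtain n :: nat where n: "\<And>\<chi> :: int \<Rightarrow> nat. \<forall>x. \<chi> x < c \<Longrightarrow> \<exists>\<chi>'. (\<forall>x. \<chi>' x < n) \<and>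
      (\<forall>x y s. \<chi>' x = \<chi>' y \<longrightarrow> \<bar>s\<bar> \<le> int M \<longrightarrow> \<chi> (x + s) = \<chi> (y + s))"
    using window_colouring[of c M] by blast
  obtain M' where M': "\<And>\<chi>'. \<forall>x. \<chi>' x < n \<Longrightarrow> mono_config Q \<chi>' M M'"
    using assms(1) unfolding vdw_family_def by blast
  obtain h0 where "h0 \<in> Q"
    using assms(2) by blast
  have "\<exists>b Gy t. blocks M M' Gy \<and> \<bar>b\<bar> \<le> int M' \<and> \<bar>t\<bar> \<le> int M' \<and>
    (\<forall>h\<in>Q. \<bar>b + h (ip_sum Gy)\<bar> \<le> int M' \<and>
      (\<forall>s. \<bar>s\<bar> \<le> int M \<longrightarrow> \<chi> (b + h (ip_sum Gy) + s) = \<chi> (t + s)))"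
    if \<chi>: "\<forall>x. \<chi> x < c" for \<chi>
  proof -
    obtain \<chi>' where "\<forall>x. \<chi>' x < n"
      and pattern: "\<And>x y s. \<chi>' x = \<chi>' y \<Longrightarrow> \<bar>s\<bar> \<le> int M \<Longrightarrow> \<chi> (x + s) = \<chi> (y + s)"
      using n[OF \<chi>] by blast
    then obtain b Gy col where "blocks M M' Gy" "\<bar>b\<bar> \<le> int M'"
      and Qy: "\<forall>h\<in>Q. \<bar>b + h (ip_sum Gy)\<bar> \<le> int M' \<and> \<chi>' (b + h (ip_sum Gy)) = col"
      using M' unfolding mono_config_def by blast
    moreover have "\<chi> (b + h (ip_sum Gy) + s) = \<chi> (b + h0 (ip_sum Gy) + s)"
      if "h \<in> Q" "\<bar>s\<bar> \<le> int M" for h s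
      using pattern Qy that \<open>h0 \<in> Q\<close> by metis
    moreover have "\<bar>b + h0 (ip_sum Gy)\<bar> \<le> int M'"
      using Qy \<open>h0 \<in> Q\<close> by blast
    ultimately show ?thesis
      by blast
  qed
  then show ?thesis
    using that by blast
qed

definition focused ::
    "((nat \<Rightarrow> int) \<Rightarrow> int) set \<Rightarrow> ((nat \<Rightarrow> int) \<Rightarrow> int) \<Rightarrow> (int \<Rightarrow> nat) \<Rightarrow> nat \<Rightarrow> nat \<Rightarrow> nat \<Rightarrow> int
      \<Rightarrow> (nat \<Rightarrow> nat \<Rightarrow> nat set) \<Rightarrow> (nat \<Rightarrow> nat) \<Rightarrow> bool" where
  "focused P p \<chi> N M r a Gs col \<longleftrightarrow> \<bar>a\<bar> \<le> int M \<and> inj_on col {..<r} \<and>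
     (\<forall>i<r. blocks N M (Gs i) \<and> (\<forall>q\<in>P - {p}.
        \<bar>a + (q - p) (ip_sum (Gs i))\<bar> \<le> int M \<and> \<chi> (a + (q - p) (ip_sum (Gs i))) = col i))"

definition focusing :: "((nat \<Rightarrow> int) \<Rightarrow> int) set \<Rightarrow> ((nat \<Rightarrow> int) \<Rightarrow> int) \<Rightarrow> nat \<Rightarrow> nat \<Rightarrow> bool" where
  "focusing P p c r \<longleftrightarrow> (\<forall>N. \<exists>M. \<forall>\<chi>. (\<forall>x. \<chi> x < c) \<longrightarrow> mono_config P \<chi> N M \<or>
     (\<exists>a Gs col. focused P p \<chi> N M r a Gs col \<and> \<chi> a \<notin> col ` {..<r}))"

lemma focused_mono:
  assumes "focused P p \<chi> N M r a Gs col" and "M \<le> M'"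
  shows "focused P p \<chi> N M' r a Gs col"
proof -
  have "int M \<le> int M'"
    using assms(2) by simp
  then show ?thesis
    using assms blocks_mono[OF _ order_refl assms(2)] unfolding focused_def by force
qed

lemma focusing_0: "focusing P p c 0"
  unfolding focusing_def focused_def by (intro allI exI[of _ 0]) auto

lemma focusing_large:
  assumes "focusing P p c r"
  obtains M where "N \<le> M" and "\<And>\<chi>. \<forall>x. \<chi> x < c \<Longrightarrow> mono_config P \<chi> N M \<or>
    (\<exists>a Gs col. focused P p \<chi> N M r a Gs col \<and> \<chi> a \<notin> col ` {..<r})"
proof -
  obtain M0 where M0: "\<And>\<chi>. \<forall>x. \<chi> x < c \<Longrightarrow> mono_config P \<chi> N M0 \<or>
      (\<exists>a Gs col. focused P p \<chi> N M0 r a Gs col \<and> \<chi> a \<notin> col ` {..<r})"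
    using assms unfolding focusing_def by blast
  show ?thesis
  proof
    show "N \<le> max M0 N"
      by simp
    show "mono_config P \<chi> N (max M0 N) \<or>
      (\<exists>a Gs col. focused P p \<chi> N (max M0 N) r a Gs col \<and> \<chi> a \<notin> col ` {..<r})"
      if "\<forall>x. \<chi> x < c" for \<chi>
      using M0[OF that] mono_config_mono[of P \<chi> N M0] focused_mono[of P p \<chi> N M0]
      by (meson max.cobounded1)
  qed
qed

lemma mono_config_if_focused:
  assumes foc: "focused P p \<chi> N M r a Gs col" and "p \<in> P" and "i < r" and "\<chi> a = col i"
    and B: "\<forall>G. blocks N M G \<longrightarrow> \<bar>p (ip_sum G)\<bar> \<le> int B"
  shows "mono_config P \<chi> N (M + B)"
proof -
  define D where "D = ip_sum (Gs i)"
  have G: "blocks N M (Gs i)" and "\<bar>a\<bar> \<le> int M"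
    and Q: "\<forall>q\<in>P - {p}. \<bar>a + (q - p) D\<bar> \<le> int M \<and> \<chi> (a + (q - p) D) = col i"
    using foc \<open>i < r\<close> unfolding focused_def D_def by auto
  have "\<bar>p D\<bar> \<le> int B"
    using B G unfolding D_def by blast
  have "\<bar>a - p D + q D\<bar> \<le> int (M + B) \<and> \<chi> (a - p D + q D) = col i" if "q \<in> P" for q
  proof (cases "q = p")
    case True
    then show ?thesis
      using \<open>\<bar>a\<bar> \<le> int M\<close> \<open>\<chi> a = col i\<close> by simp
  next
    case False
    then have "\<bar>a + (q - p) D\<bar> \<le> int M \<and> \<chi> (a + (q - p) D) = col i"
      using Q that by blast
    then show ?thesis
      by (simp add: algebra_simps)
  qed
  moreover have "\<bar>a - p D\<bar> \<le> int (M + B)"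
    using \<open>\<bar>a\<bar> \<le> int M\<close> \<open>\<bar>p D\<bar> \<le> int B\<close> by simp
  moreover have "blocks N (M + B) (Gs i)"
    using blocks_mono[OF G] by simp
  ultimately show ?thesis
    unfolding mono_config_def D_def by blast
qed

text \<open>The spokes at \<open>a\<close> for \<open>\<chi>\<close> translated by \<open>t\<close> are carried to spokes at \<open>b + a\<close> through the
  recurring windows, where block \<open>i\<close> becomes \<open>Gs i \<union> Gy\<close> by recentring at \<open>D\<^sub>i\<close>; the blocks \<open>Gy\<close>
  alone give a new spoke, of the colour \<open>\<chi> (t + a)\<close> not used so far.\<close>

lemma focused_extend:
  assumes foc: "focused P p (\<lambda>x. \<chi> (t + x)) N M r a Gs col" and fresh: "\<chi> (t + a) \<notin> col ` {..<r}"
    and Gy: "blocks M M' Gy" and "N \<le> M" and "\<bar>b\<bar> \<le> int M'"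
    and Q: "\<And>h s. h \<in> pet_family p P (ip_sum ` {G. blocks N M G}) \<Longrightarrow> \<bar>s\<bar> \<le> int M \<Longrightarrow>
      \<bar>b + h (ip_sum Gy)\<bar> \<le> int M' \<and> \<chi> (b + h (ip_sum Gy) + s) = \<chi> (t + s)"
  shows "focused P p \<chi> N (M + M') (Suc r) (b + a)
    (\<lambda>i. if i < r then (\<lambda>j. Gs i j \<union> Gy j) else Gy) (\<lambda>i. if i < r then col i else \<chi> (t + a))"
    (is "focused _ _ _ _ _ _ _ ?Gs ?col")
proof -
  define y where "y = ip_sum Gy"
  have a: "\<bar>a\<bar> \<le> int M" and inj: "inj_on col {..<r}"
    and old_blocks: "\<And>i. i < r \<Longrightarrow> blocks N M (Gs i)"
    and old: "\<And>i q. i < r \<Longrightarrow> q \<in> P - {p} \<Longrightarrow>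
      \<bar>a + (q - p) (ip_sum (Gs i))\<bar> \<le> int M \<and> \<chi> (t + (a + (q - p) (ip_sum (Gs i)))) = col i"
    using foc unfolding focused_def by auto
  have "inj_on ?col {..<Suc r}"
    unfolding lessThan_Suc using inj fresh by (auto simp: inj_on_def) (metis imageI lessThan_iff)
  moreover have "blocks N (M + M') (?Gs i) \<and> (\<forall>q\<in>P - {p}.
      \<bar>b + a + (q - p) (ip_sum (?Gs i))\<bar> \<le> int (M + M') \<and> \<chi> (b + a + (q - p) (ip_sum (?Gs i))) = ?col i)"
    if "i < Suc r" for i
  proof (cases "i < r")
    case True
    define D where "D = ip_sum (Gs i)"
    have "blocks N (M + M') (?Gs i)" "ip_sum (?Gs i) = D + y"
      using blocks_union[OF old_blocks[OF True] Gy] blocks_mono True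
      unfolding D_def y_def by auto
    moreover have "\<bar>b + a + (q - p) (D + y)\<bar> \<le> int (M + M') \<and> \<chi> (b + a + (q - p) (D + y)) = col i"
      if "q \<in> P - {p}" for q
    proof -
      define h where "h = recentre D (q - p)"
      define s where "s = a + (q - p) D"
      have "h \<in> pet_family p P (ip_sum ` {G. blocks N M G})"
        using that old_blocks[OF True] unfolding h_def D_def pet_family_def by blast
      moreover have "\<bar>s\<bar> \<le> int M" and "\<chi> (t + s) = col i"
        using old[OF True that] unfolding s_def D_def by auto
      ultimately have "\<bar>b + h y\<bar> \<le> int M'" "\<chi> (b + h y + s) = col i"
        using Q[of h s] unfolding y_def by auto
      moreover have eq: "b + a + (q - p) (D + y) = b + h y + s"
        unfolding h_def s_def recentre_def by (simp add: add.commute)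
      ultimately show ?thesis
        unfolding eq using \<open>\<bar>s\<bar> \<le> int M\<close> by (simp add: abs_le_iff)
    qed
    ultimately show ?thesis
      using True by simp
  next
    case False
    then have "i = r"
      using that by simp
    have "blocks N (M + M') Gy"
      using blocks_mono[OF Gy \<open>N \<le> M\<close>] by simp
    moreover have "\<bar>b + a + (q - p) y\<bar> \<le> int (M + M') \<and> \<chi> (b + a + (q - p) y) = \<chi> (t + a)"
      if "q \<in> P - {p}" for q
    proof -
      have "q - p \<in> pet_family p P (ip_sum ` {G. blocks N M G})"
        using that unfolding pet_family_def by blast
      then have "\<bar>b + (q - p) y\<bar> \<le> int M'" "\<chi> (b + (q - p) y + a) = \<chi> (t + a)"
        using Q[of "q - p" a] a unfolding y_def by auto
      moreover have eq: "b + a + (q - p) y = b + (q - p) y + a"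
        by simp
      ultimately show ?thesis
        unfolding eq using a by (simp add: abs_le_iff)
    qed
    ultimately show ?thesis
      using \<open>i = r\<close> unfolding y_def by simp
  qed
  moreover have "\<bar>b + a\<bar> \<le> int (M + M')"
    using a \<open>\<bar>b\<bar> \<le> int M'\<close> by simp
  ultimately show ?thesis
    unfolding focused_def by blast
qed

lemma focusing_Suc:
  assumes P: "finite P" "\<forall>u\<in>P. admissible u" and "p \<in> P" and min: "\<forall>q\<in>P. deg p \<le> deg q"
    and "P - {p} \<noteq> {}"
    and IH: "\<And>Q. finite Q \<Longrightarrow> \<forall>u\<in>Q. admissible u \<Longrightarrow> pet_weight Q < pet_weight P \<Longrightarrow> vdw_family Q"
    and "focusing P p c r"
  shows "focusing P p c (Suc r)"
  unfolding focusing_def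
proof
  fix N
  obtain M where "N \<le> M" and focM: "\<And>\<chi>. \<forall>x. \<chi> x < c \<Longrightarrow> mono_config P \<chi> N M \<or>
      (\<exists>a Gs col. focused P p \<chi> N M r a Gs col \<and> \<chi> a \<notin> col ` {..<r})"
    using focusing_large[OF \<open>focusing P p c r\<close>] by blast
  define Q where "Q = pet_family p P (ip_sum ` {G. blocks N M G})"
  have "finite Q"
    unfolding Q_def using P(1) finite_blocks by (intro finite_pet_family) auto
  moreover have "\<forall>u\<in>Q. admissible u"
    unfolding Q_def using admissible_pet_family[OF P(2) \<open>p \<in> P\<close>] by blast
  moreover have "pet_weight Q < pet_weight P"
    unfolding Q_def using pet_weight_pet_family_less[OF P \<open>p \<in> P\<close> min] finite_blocks by blast
  ultimately have "vdw_family Q"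
    by (rule IH)
  moreover have "Q \<noteq> {}"
    using \<open>P - {p} \<noteq> {}\<close> unfolding Q_def pet_family_def by blast
  ultimately obtain M' where M': "\<And>\<chi>. \<forall>x. \<chi> x < c \<Longrightarrow> \<exists>b Gy t. blocks M M' Gy \<and>
    \<bar>b\<bar> \<le> int M' \<and> \<bar>t\<bar> \<le> int M' \<and> (\<forall>h\<in>Q. \<bar>b + h (ip_sum Gy)\<bar> \<le> int M' \<and>
      (\<forall>s. \<bar>s\<bar> \<le> int M \<longrightarrow> \<chi> (b + h (ip_sum Gy) + s) = \<chi> (t + s)))"
    using recurrent_windows by blast
  obtain B where B: "\<forall>G. blocks N (M + M') G \<longrightarrow> \<bar>p (ip_sum G)\<bar> \<le> int B"
    using blocks_bounded by blast
  show "\<exists>M2. \<forall>\<chi>. (\<forall>x. \<chi> x < c) \<longrightarrow> mono_config P \<chi> N M2 \<or>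
    (\<exists>a Gs col. focused P p \<chi> N M2 (Suc r) a Gs col \<and> \<chi> a \<notin> col ` {..<Suc r})"
  proof (intro exI allI impI)
    fix \<chi> :: "int \<Rightarrow> nat"
    assume \<chi>: "\<forall>x. \<chi> x < c"
    then obtain b Gy t where Gy: "blocks M M' Gy" and "\<bar>b\<bar> \<le> int M'" "\<bar>t\<bar> \<le> int M'"
      and Qt: "\<forall>h\<in>Q. \<bar>b + h (ip_sum Gy)\<bar> \<le> int M' \<and>
        (\<forall>s. \<bar>s\<bar> \<le> int M \<longrightarrow> \<chi> (b + h (ip_sum Gy) + s) = \<chi> (t + s))"
      using M' by blast
    have "\<forall>x. \<chi> (t + x) < c"
      using \<chi> by blast
    from focM[OF this]
    show "mono_config P \<chi> N (M + M' + B) \<or> (\<exists>a Gs col. focused P p \<chi> N (M + M' + B) (Suc r) a Gs col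
      \<and> \<chi> a \<notin> col ` {..<Suc r})"
    proof (elim disjE exE conjE)
      assume "mono_config P (\<lambda>x. \<chi> (t + x)) N M"
      then show ?thesis
        using mono_config_translate[OF _ \<open>\<bar>t\<bar> \<le> int M'\<close>] mono_config_mono by fastforce
    next
      fix a Gs col
      assume "focused P p (\<lambda>x. \<chi> (t + x)) N M r a Gs col" and "\<chi> (t + a) \<notin> col ` {..<r}"
      from focused_extend[OF this Gy \<open>N \<le> M\<close> \<open>\<bar>b\<bar> \<le> int M'\<close>] Qt
      obtain Gs' col' where foc': "focused P p \<chi> N (M + M') (Suc r) (b + a) Gs' col'"
        unfolding Q_def by blast
      show ?thesis
      proof (cases "\<chi> (b + a) \<in> col' ` {..<Suc r}")
        case True
        then show ?thesis
          using mono_config_if_focused[OF foc' \<open>p \<in> P\<close> _ _ B] by fastforce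
      next
        case False
        then show ?thesis
          using focused_mono[OF foc', of "M + M' + B"] by auto
      qed
    qed
  qed
qed

text \<open>With \<open>c\<close> colours a focused configuration of length \<open>c\<close> uses up all colours, so the
  focal point shares a colour with one of its spokes.\<close>

lemma vdw_family_if_focusing:
  assumes "P - {p} \<noteq> {}" and "\<And>c. focusing P p c c"
  shows "vdw_family P"
  unfolding vdw_family_def
proof (intro allI)
  fix c N
  obtain M where M: "\<And>\<chi>. \<forall>x. \<chi> x < c \<Longrightarrow> mono_config P \<chi> N M \<or>
      (\<exists>a Gs col. focused P p \<chi> N M c a Gs col \<and> \<chi> a \<notin> col ` {..<c})"
    using assms(2)[of c] unfolding focusing_def by blast
  have "\<not> (focused P p \<chi> N M c a Gs col \<and> \<chi> a \<notin> col ` {..<c})"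
    if \<chi>: "\<forall>x. \<chi> x < c" for \<chi> a Gs col
  proof
    assume "focused P p \<chi> N M c a Gs col \<and> \<chi> a \<notin> col ` {..<c}"
    then have foc: "focused P p \<chi> N M c a Gs col" and "\<chi> a \<notin> col ` {..<c}"
      by auto
    obtain q where "q \<in> P - {p}"
      using assms(1) by blast
    then have "col ` {..<c} \<subseteq> {..<c}"
      using foc \<chi> unfolding focused_def by (metis image_subsetI lessThan_iff)
    moreover have "card (col ` {..<c}) = card {..<c}"
      using foc unfolding focused_def by (simp add: card_image)
    ultimately have "col ` {..<c} = {..<c}"
      by (simp add: card_subset_eq)
    then show False
      using \<open>\<chi> a \<notin> col ` {..<c}\<close> \<chi> by simp
  qed
  then show "\<exists>M. \<forall>\<chi>. (\<forall>x. \<chi> x < c) \<longrightarrow> mono_config P \<chi> N M"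
    using M by blast
qed

theorem vdw_family_admissible:
  "finite P \<Longrightarrow> \<forall>u\<in>P. admissible u \<Longrightarrow> vdw_family P"
proof (induction "pet_weight P" arbitrary: P rule: less_induct)
  case less
  show ?case
  proof (cases "\<exists>p. P \<subseteq> {p}")
    case True
    then show ?thesis
      using vdw_family_subsingleton by blast
  next
    case False
    then have "P \<noteq> {}"
      by blast
    obtain p where "p \<in> P" and min: "\<forall>q\<in>P. deg p \<le> deg q"
      using arg_min_if_finite(1,2)[OF less.prems(1) \<open>P \<noteq> {}\<close>, of deg] by (metis not_less)
    have "P - {p} \<noteq> {}"
      using False by blast
    have "focusing P p c r" for c r
    proof (induction r)
      case 0
      show ?case
        by (rule focusing_0)
    next
      case (Suc r)
      show ?case
        using focusing_Suc[OF less.prems \<open>p \<in> P\<close> min \<open>P - {p} \<noteq> {}\<close> less.hyps Suc] by blast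
    qed
    then show ?thesis
      using vdw_family_if_focusing[OF \<open>P - {p} \<noteq> {}\<close>] by blast
  qed
qed

end

section \<open>Application to integer polynomials\<close>

lemma colouring_of_cover:
  assumes "\<Union>\<C> = UNIV" and "finite \<C>"
  obtains \<chi> :: "'a \<Rightarrow> nat" and c where "\<forall>x. \<chi> x < c" and "\<And>x. \<exists>C\<in>\<C>. {y. \<chi> y = \<chi> x} \<subseteq> C"
proof -
  obtain e :: "'a set \<Rightarrow> nat" and c where e: "e ` \<C> = {i. i < c}" "inj_on e \<C>"
    using finite_imp_inj_to_nat_seg[OF assms(2)] by blast
  define cell where "cell x = (SOME C. C \<in> \<C> \<and> x \<in> C)" for x
  have cell: "cell x \<in> \<C> \<and> x \<in> cell x" for x
    unfolding cell_def using assms(1) by (rule_tac someI_ex) blast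
  show ?thesis
  proof
    show "\<forall>x. e (cell x) < c"
      using e(1) cell by blast
    show "\<exists>C\<in>\<C>. {y. e (cell y) = e (cell x)} \<subseteq> C" for x
      using cell e(2) unfolding inj_on_def by blast
  qed
qed

lemma admissible_lift:
  fixes p :: "nat \<Rightarrow> (nat \<Rightarrow> int) \<Rightarrow> int"
  assumes "\<forall>i<m. (\<exists>d. deg_le d (p i)) \<and> p i 0 = 0"
  obtains L where "admissible L" and "\<forall>i<m. admissible (p i + L)"
proof -
  define e :: "nat \<Rightarrow> int" where "e = (\<lambda>j. if j = 0 then 1 else 0)"
  define C where "C = 1 + (\<Sum>i<m. \<bar>p i e\<bar>)"
  define L where "L = (\<lambda>x :: nat \<Rightarrow> int. C * x 0)"
  have deg_L: "deg_le 1 L"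
    unfolding L_def by (rule deg_le_cmult[OF deg_le_coordinate])
  have p_e: "\<bar>p i e\<bar> < C" if "i < m" for i
    using member_le_sum[of i "{..<m}" "\<lambda>i. \<bar>p i e\<bar>"] that unfolding C_def by simp
  have "C > 0"
    unfolding C_def by (simp add: sum_nonneg add_pos_nonneg)
  then have "L e \<noteq> 0"
    by (simp add: L_def e_def)
  moreover have "L 0 = 0"
    by (simp add: L_def)
  ultimately have "admissible L"
    using deg_L unfolding admissible_def by (metis zero_fun_apply)
  moreover have "admissible (p i + L)" if i: "i < m" for i
  proof -
    obtain d where "deg_le d (p i)" and "p i 0 = 0"
      using assms i by blast
    then have "deg_le (max d 1) (p i + L)"
      using deg_le_add deg_le_mono deg_L by (metis max.cobounded1 max.cobounded2)
    moreover have "(p i + L) e \<noteq> 0"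
      using p_e[OF i] by (auto simp: L_def e_def)
    moreover have "(p i + L) 0 = 0"
      using \<open>p i 0 = 0\<close> by (simp add: L_def)
    ultimately show ?thesis
      unfolding admissible_def by (metis zero_fun_apply)
  qed
  ultimately show ?thesis
    using that by blast
qed

theorem mainTheorem3:
  fixes k m :: nat
    and p :: "nat \<Rightarrow> (nat \<Rightarrow> int) \<Rightarrow> int"
    and \<C> :: "int set set"
    and f :: "nat \<Rightarrow> nat \<Rightarrow> int"
  assumes polys: "\<forall>i<m. int_poly_no_const k (p i)"
    and part: "partition_on (UNIV :: int set) \<C>"
    and fin: "finite \<C>"
  shows "\<exists>C\<in>\<C>. \<exists>a::int. \<exists>F :: nat \<Rightarrow> nat set.
           (\<forall>j<k. finite (F j) \<and> F j \<noteq> {}) \<and>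
           {a + p i (\<lambda>j. \<Sum>t\<in>F j. f j t) | i. i < m} \<subseteq> C"
proof -
  obtain \<chi> :: "int \<Rightarrow> nat" and c where \<chi>: "\<forall>x. \<chi> x < c"
    and cells: "\<And>x. \<exists>C\<in>\<C>. {y. \<chi> y = \<chi> x} \<subseteq> C"
    using colouring_of_cover[OF partition_onD1[OF part, symmetric] fin] by blast
  obtain L where L: "admissible L" "\<forall>i<m. admissible (p i + L)"
    using admissible_lift[of m p] polys int_poly_no_const_deg_le int_poly_no_const_zero by blast
  \<comment> \<open>Adding \<open>L\<close> moves every point by the same \<open>L y\<close> and makes each \<open>p i + L\<close> nonzero.\<close>
  define PP where "PP = insert L ((\<lambda>i. p i + L) ` {..<m})"
  have "vdw_family f k PP"
    using vdw_family_admissible L unfolding PP_def by auto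
  then obtain M where "mono_config f k PP \<chi> 0 M"
    using \<chi> unfolding vdw_family_def by blast
  then obtain a G col where G: "blocks k 0 M G" and mono: "\<forall>u\<in>PP. \<chi> (a + u (ip_sum f G)) = col"
    unfolding mono_config_def by blast
  define x0 where "x0 = a + L (ip_sum f G)"
  obtain C where "C \<in> \<C>" and C: "{y. \<chi> y = \<chi> x0} \<subseteq> C"
    using cells by blast
  have "{x0 + p i (\<lambda>j. \<Sum>t\<in>G j. f j t) | i. i < m} \<subseteq> C"
    using mono C unfolding PP_def x0_def ip_sum_def by (auto simp: algebra_simps)
  moreover have "\<forall>j<k. finite (G j) \<and> G j \<noteq> {}"
    using G unfolding blocks_def by (meson finite_greaterThanAtMost finite_subset)
  ultimately show ?thesis
    using \<open>C \<in> \<C>\<close> by blast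
qed

end
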